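(* Let $n\ge 6$ and let $R_n(3,3)$ be the graph obtained from two triangles $uv_1v_2$ and $uw_1w_2$ sharing exactly the vertex $u$ by attaching $n-5$ pendant edges (new leaves) to the vertex $v_1$. Then \[ \operatorname{avm}(R_n(3,3))=\frac{7n-27}{3n-11}. \]
   Context: For a finite simple graph $G$, $\operatorname{avm}(G)$ is the average of $|M|$ over all maximal matchings $M$ of $G$ (a matching is maximal if it is not properly contained in another matching). *)

theory Defs
  imports Main "HOL-Library.Disjoint_Sets" Complex_Main
begin

text \<open>A finite simple graph is represented by its (finite) set of edges, each edge
  being a 2-element set of vertices. Isolated vertices do not affect matchings.\<close>

definition simple_graph :: "'a set set \<Rightarrow> bool" where
  "simple_graph E \<longleftrightarrow> finite E \<and> (\<forall>e\<in>E. card e = 2)"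

definition matching :: "'a set set \<Rightarrow> 'a set set \<Rightarrow> bool" where
  "matching E M \<longleftrightarrow> M \<subseteq> E \<and> (\<forall>e\<in>M. \<forall>f\<in>M. e \<noteq> f \<longrightarrow> e \<inter> f = {})"

definition maximal_matching :: "'a set set \<Rightarrow> 'a set set \<Rightarrow> bool" where
  "maximal_matching E M \<longleftrightarrow> matching E M \<and> (\<forall>M'. matching E M' \<and> M \<subseteq> M' \<longrightarrow> M' = M)"

definition avm :: "'a set set \<Rightarrow> real" where
  "avm E = (\<Sum>M\<in>{M. maximal_matching E M}. real (card M)) / real (card {M. maximal_matching E M})"

text \<open>R_n(3,3): vertices u=0, v1=1, v2=2, w1=3, w2=4, leaves 5,...,n-1 attached to v1.\<close>

definition R33 :: "nat \<Rightarrow> nat set set" where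
  "R33 n = {{0,1},{0,2},{1,2},{0,3},{0,4},{3,4}} \<union> {{1,k} | k. 5 \<le> k \<and> k < n}"

end

theory Submission
  imports Defs
begin

text \<open>
  A matching is maximal iff every edge outside it meets a matched vertex. With
  \<open>u = 0, v\<^sub>1 = 1, v\<^sub>2 = 2, w\<^sub>1 = 3, w\<^sub>2 = 4\<close>, this pins down the maximal matchings of
  \<open>R\<^sub>n(3,3)\<close>: they are \<open>{uv\<^sub>1, w\<^sub>1w\<^sub>2}\<close>, \<open>{v\<^sub>1v\<^sub>2, w\<^sub>1w\<^sub>2}\<close>, \<open>{uv\<^sub>2, v\<^sub>1x, w\<^sub>1w\<^sub>2}\<close> for a leaf
  \<open>x\<close>, and \<open>{uw, v\<^sub>1y}\<close> for \<open>w \<in> {w\<^sub>1, w\<^sub>2}\<close> and \<open>y\<close> equal to \<open>v\<^sub>2\<close> or a leaf. That is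
  \<open>2 + (n - 5) + 2(n - 4) = 3n - 11\<close> matchings with \<open>4 + 3(n - 5) + 4(n - 4) = 7n - 27\<close> edges
  in total. Each listed matching is maximal because its vertex set is a vertex cover; conversely,
  following how \<open>w\<^sub>1w\<^sub>2\<close> and \<open>v\<^sub>1\<close> are dominated, every maximal matching contains a listed one,
  and then equals it because the listed one is itself maximal.
\<close>

lemma matching_empty [simp]: "matching E {}"
  by (simp add: matching_def)

lemma matching_insert [simp]:
  "matching E (insert e M) \<longleftrightarrow> e \<in> E \<and> matching E M \<and> (\<forall>f\<in>M. f \<noteq> e \<longrightarrow> e \<inter> f = {})"
  unfolding matching_def by blast

lemma matching_disjoint:
  "matching E M \<Longrightarrow> e \<in> M \<Longrightarrow> f \<in> M \<Longrightarrow> e \<noteq> f \<Longrightarrow> e \<inter> f = {}"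
  unfolding matching_def by blast

lemma maximal_matching_iff:
  "maximal_matching E M \<longleftrightarrow> matching E M \<and> (\<forall>e\<in>E - M. e \<inter> \<Union>M \<noteq> {})"
proof
  assume max: "maximal_matching E M"
  then have M: "matching E M" by (simp add: maximal_matching_def)
  have "e \<inter> \<Union>M \<noteq> {}" if e: "e \<in> E - M" for e
  proof
    assume "e \<inter> \<Union>M = {}"
    then have "matching E (insert e M)"
      using M e unfolding matching_def by blast
    then show False
      using max e unfolding maximal_matching_def by blast
  qed
  with M show "matching E M \<and> (\<forall>e\<in>E - M. e \<inter> \<Union>M \<noteq> {})" by blast
next
  assume M: "matching E M \<and> (\<forall>e\<in>E - M. e \<inter> \<Union>M \<noteq> {})"
  have "M' = M" if M': "matching E M'" "M \<subseteq> M'" for M'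
  proof (rule ccontr)
    assume "M' \<noteq> M"
    with M' obtain e where e: "e \<in> M'" "e \<notin> M" by blast
    moreover from e M' have "e \<in> E"
      unfolding matching_def by blast
    ultimately have "e \<inter> \<Union>M \<noteq> {}"
      using M by blast
    then obtain f where f: "f \<in> M" "e \<inter> f \<noteq> {}"
      by auto
    moreover have "f \<in> M'" "e \<noteq> f"
      using f e M'(2) by auto
    ultimately show False
      using matching_disjoint[OF M'(1) e(1)] by blast
  qed
  with M show "maximal_matching E M"
    unfolding maximal_matching_def by blast
qed

lemma matching_adjacent_not_mem:
  "matching E M \<Longrightarrow> e \<in> M \<Longrightarrow> e \<noteq> f \<Longrightarrow> e \<inter> f \<noteq> {} \<Longrightarrow> f \<notin> M"
  using matching_disjoint by blast

lemma maximal_matching_subset: "maximal_matching E M \<Longrightarrow> M \<subseteq> E"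
  unfolding maximal_matching_def matching_def by blast

lemma maximal_matching_adjacent_edge:
  assumes "maximal_matching E M" and "{x,y} \<in> E" and "{x,y} \<notin> M"
  obtains f where "f \<in> M" and "x \<in> f \<or> y \<in> f"
proof -
  have "{x,y} \<inter> \<Union>M \<noteq> {}"
    using assms unfolding maximal_matching_iff by blast
  then show ?thesis
    using that by auto
qed

lemma maximal_matchingI_vertex_cover:
  assumes "matching E M" and "\<And>e. e \<in> E \<Longrightarrow> e \<inter> C \<noteq> {}" and "C \<subseteq> \<Union>M"
  shows "maximal_matching E M"
  using assms unfolding maximal_matching_iff by blast

lemma mem_R33:
  "e \<in> R33 n \<longleftrightarrow> e = {0,1} \<or> e = {0,2} \<or> e = {1,2} \<or> e = {0,3} \<or> e = {0,4} \<or> e = {3,4}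
     \<or> (\<exists>k. e = {1,k} \<and> 5 \<le> k \<and> k < n)"
  unfolding R33_def by (simp only: Un_iff insert_iff empty_iff mem_Collect_eq disj_assoc simp_thms)

lemma R33_triangle_edges:
  "{0,1} \<in> R33 n" "{0,2} \<in> R33 n" "{1,2} \<in> R33 n" "{0,3} \<in> R33 n" "{0,4} \<in> R33 n" "{3,4} \<in> R33 n"
  by (simp_all add: R33_def)

lemma R33_leaf_edge: "5 \<le> k \<Longrightarrow> k < n \<Longrightarrow> {1,k} \<in> R33 n"
  unfolding mem_R33 by blast

lemma R33_vertex_covers:
  assumes "C \<in> {{0,1,3}, {0,1,4}, {1,2,3,4}}" and "e \<in> R33 n"
  shows "e \<inter> C \<noteq> {}"
  using assms unfolding mem_R33 by (elim insertE emptyE disjE exE conjE) simp_all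

definition R33_maximal_matchings :: "nat \<Rightarrow> nat set set set" where
  "R33_maximal_matchings n =
     {{{0,1},{3,4}}, {{1,2},{3,4}}}
     \<union> (\<lambda>k. {{0,2},{1,k},{3,4}}) ` {5..<n}
     \<union> (\<lambda>(w,k). {{0,w},{1,k}}) ` ({3,4} \<times> insert 2 {5..<n})"

lemma R33_maximal_matchingsI:
  shows "{{0,1},{3,4}} \<in> R33_maximal_matchings n"
    and "{{1,2},{3,4}} \<in> R33_maximal_matchings n"
    and "k \<in> {5..<n} \<Longrightarrow> {{0,2},{1,k},{3,4}} \<in> R33_maximal_matchings n"
    and "w \<in> {3,4} \<Longrightarrow> k \<in> insert 2 {5..<n} \<Longrightarrow> {{0,w},{1,k}} \<in> R33_maximal_matchings n"
proof -
  show "{{0,1},{3,4}} \<in> R33_maximal_matchings n" "{{1,2},{3,4}} \<in> R33_maximal_matchings n"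
    by (simp_all add: R33_maximal_matchings_def)
  show "{{0,2},{1,k},{3,4}} \<in> R33_maximal_matchings n" if "k \<in> {5..<n}"
    using that unfolding R33_maximal_matchings_def by blast
  show "{{0,w},{1,k}} \<in> R33_maximal_matchings n" if "w \<in> {3,4}" "k \<in> insert 2 {5..<n}"
    using that unfolding R33_maximal_matchings_def
    by (intro UnI2 rev_image_eqI[where x = "(w,k)"]) auto
qed

lemma maximal_matching_R33I:
  assumes "M \<in> R33_maximal_matchings n"
  shows "maximal_matching (R33 n) M"
proof -
  have M: "matching (R33 n) M"
    using assms unfolding R33_maximal_matchings_def
    \<comment> \<open>without deleting One_nat_def, simp turns 1 into Suc 0 and the edge lemmas no longer match\<close>
    by (elim UnE insertE imageE SigmaE emptyE)
      (simp_all add: R33_triangle_edges R33_leaf_edge del: One_nat_def)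
  have "\<exists>C\<in>{{0,1,3}, {0,1,4}, {1,2,3,4}}. C \<subseteq> \<Union>M"
    using assms unfolding R33_maximal_matchings_def
    by (elim UnE insertE imageE SigmaE emptyE) simp_all
  then obtain C where C: "C \<in> {{0,1,3}, {0,1,4}, {1,2,3,4}}" "C \<subseteq> \<Union>M"
    by blast
  show ?thesis
    using M R33_vertex_covers[OF C(1)] C(2) by (rule maximal_matchingI_vertex_cover)
qed

lemma maximal_matching_R33_matches_v1:
  assumes "n \<ge> 6" and max: "maximal_matching (R33 n) M"
    and "{0,1} \<notin> M" and "{1,2} \<notin> M"
  shows "\<exists>k\<in>{5..<n}. {1,k} \<in> M"
proof (cases "{1,5} \<in> M")
  case True
  with assms(1) show ?thesis by auto
next
  case False
  have "{1,5} \<in> R33 n"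
    using assms(1) by (intro R33_leaf_edge) auto
  obtain f where f: "f \<in> M" "1 \<in> f \<or> 5 \<in> f"
    using max \<open>{1,5} \<in> R33 n\<close> False by (rule maximal_matching_adjacent_edge)
  moreover have "f \<in> R33 n"
    using f(1) maximal_matching_subset[OF max] by blast
  ultimately show ?thesis
    using assms(3,4) unfolding mem_R33 by auto
qed

lemma maximal_matching_R33_matches_w1w2:
  assumes max: "maximal_matching (R33 n) M"
  shows "(\<exists>w\<in>{3,4}. {0,w} \<in> M) \<or> {3,4} \<in> M"
proof (rule ccontr)
  assume none: "\<not> ?thesis"
  then have "{3,4} \<notin> M" by blast
  obtain f where f: "f \<in> M" "3 \<in> f \<or> 4 \<in> f"
    using max R33_triangle_edges(6) \<open>{3,4} \<notin> M\<close> by (rule maximal_matching_adjacent_edge)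
  moreover have "f \<in> R33 n"
    using f(1) maximal_matching_subset[OF max] by blast
  ultimately show False
    using none unfolding mem_R33 by auto
qed

lemma maximal_matching_R33_matches_v2:
  assumes max: "maximal_matching (R33 n) M"
    and "{3,4} \<in> M" and "{0,1} \<notin> M" and "{1,2} \<notin> M"
  shows "{0,2} \<in> M"
proof (rule ccontr)
  assume absent: "{0,2} \<notin> M"
  obtain f where f: "f \<in> M" "0 \<in> f \<or> 2 \<in> f"
    using max R33_triangle_edges(2) absent by (rule maximal_matching_adjacent_edge)
  moreover have "f \<in> R33 n"
    using f(1) maximal_matching_subset[OF max] by blast
  moreover have "{0,3} \<notin> M" "{0,4} \<notin> M"
    using max matching_adjacent_not_mem[of "R33 n" M "{3,4}"] assms(2)
    by (auto simp: maximal_matching_def doubleton_eq_iff)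
  ultimately show False
    using assms(3,4) absent unfolding mem_R33 by auto
qed

lemma maximal_matching_R33E:
  assumes "n \<ge> 6" and max: "maximal_matching (R33 n) M"
  obtains S where "S \<in> R33_maximal_matchings n" and "S \<subseteq> M"
proof -
  have M: "matching (R33 n) M"
    using max by (simp add: maximal_matching_def)
  have v1: "\<exists>k\<in>{5..<n}. {1,k} \<in> M" if "{0,1} \<notin> M" "{1,2} \<notin> M"
    using assms that by (rule maximal_matching_R33_matches_v1)
  from maximal_matching_R33_matches_w1w2[OF max] show thesis
  proof (elim disjE bexE)
    fix w assume w: "w \<in> {3,4}" "{0,w} \<in> M"
    then have "{0,1} \<notin> M"
      using matching_adjacent_not_mem[OF M w(2), of "{0,1}"] by (auto simp: doubleton_eq_iff)
    with v1 obtain k where k: "k \<in> insert 2 {5..<n}" "{1,k} \<in> M" by blast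
    show thesis
    proof (rule that)
      show "{{0,w},{1,k}} \<in> R33_maximal_matchings n"
        using w(1) k(1) by (rule R33_maximal_matchingsI(4))
    qed (use w k in simp)
  next
    assume w: "{3,4} \<in> M"
    consider "{0,1} \<in> M" | "{1,2} \<in> M" | "{0,1} \<notin> M" "{1,2} \<notin> M" by blast
    then show thesis
    proof cases
      case 1
      with w show thesis
        using that[OF R33_maximal_matchingsI(1)] by simp
    next
      case 2
      with w show thesis
        using that[OF R33_maximal_matchingsI(2)] by simp
    next
      case 3
      then obtain k where k: "k \<in> {5..<n}" "{1,k} \<in> M"
        using v1 by blast
      have "{0,2} \<in> M"
        using max w 3 by (rule maximal_matching_R33_matches_v2)
      show thesis
      proof (rule that)
        show "{{0,2},{1,k},{3,4}} \<in> R33_maximal_matchings n"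
          using k(1) by (rule R33_maximal_matchingsI(3))
      qed (use \<open>{0,2} \<in> M\<close> k w in simp)
    qed
  qed
qed

lemma maximal_matchings_R33:
  assumes "n \<ge> 6"
  shows "{M. maximal_matching (R33 n) M} = R33_maximal_matchings n"
proof (intro equalityI subsetI)
  fix M assume "M \<in> {M. maximal_matching (R33 n) M}"
  then have max: "maximal_matching (R33 n) M" by simp
  obtain S where S: "S \<in> R33_maximal_matchings n" "S \<subseteq> M"
    using assms max by (rule maximal_matching_R33E)
  have "M = S"
    using maximal_matching_R33I[OF S(1)] max S(2)
    unfolding maximal_matching_def by blast
  with S(1) show "M \<in> R33_maximal_matchings n" by simp
qed (simp add: maximal_matching_R33I)

lemma sum_R33_maximal_matchings:
  "(\<Sum>M\<in>R33_maximal_matchings n. f M) =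
     f {{0,1},{3,4}} + f {{1,2},{3,4}} + (\<Sum>k\<in>{5..<n}. f {{0,2},{1,k},{3,4}})
     + (\<Sum>(w,k)\<in>{3,4} \<times> insert 2 {5..<n}. f {{0,w},{1,k}})"
proof -
  define A :: "nat set set set" where "A = {{{0,1},{3,4}}, {{1,2},{3,4}}}"
  define B where "B = (\<lambda>k. {{0,2},{1,k},{3,4}}) ` {5..<n}"
  define C where "C = (\<lambda>(w,k). {{0,w},{1,k}}) ` ({3,4} \<times> insert 2 {5..<n})"
  have inj_B: "inj_on (\<lambda>k. {{0,2},{1,k},{3,4}}) {5..<n}"
    by (rule inj_onI) (simp add: doubleton_eq_iff insert_eq_iff)
  have inj_C: "inj_on (\<lambda>(w,k). {{0,w},{1,k}}) ({3,4} \<times> insert 2 {5..<n})"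
    by (rule inj_onI) (clarsimp simp: doubleton_eq_iff, presburger)
  have "A \<inter> B = {}"
  proof -
    have "{0,2} \<in> S" if "S \<in> B" for S
      using that unfolding B_def by blast
    moreover have "{0,2} \<notin> S" if "S \<in> A" for S
      using that unfolding A_def by (elim insertE emptyE) (simp_all add: doubleton_eq_iff)
    ultimately show ?thesis by blast
  qed
  have "(A \<union> B) \<inter> C = {}"
  proof -
    have "{3,4} \<in> S" if "S \<in> A \<union> B" for S
      using that unfolding A_def B_def by blast
    moreover have "{3,4} \<notin> S" if "S \<in> C" for S
      using that unfolding C_def by (elim imageE SigmaE insertE emptyE) (simp_all add: doubleton_eq_iff)
    ultimately show ?thesis by blast
  qed
  have "finite A" "finite B" "finite C"
    unfolding A_def B_def C_def by simp_all
  have "R33_maximal_matchings n = A \<union> B \<union> C"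
    unfolding R33_maximal_matchings_def A_def B_def C_def ..
  then have "(\<Sum>M\<in>R33_maximal_matchings n. f M) = sum f A + sum f B + sum f C"
    using \<open>finite A\<close> \<open>finite B\<close> \<open>finite C\<close> \<open>A \<inter> B = {}\<close> \<open>(A \<union> B) \<inter> C = {}\<close>
    by (simp add: sum.union_disjoint)
  also have "sum f A = f {{0,1},{3,4}} + f {{1,2},{3,4}}"
    unfolding A_def by (simp add: doubleton_eq_iff)
  also have "sum f B = (\<Sum>k\<in>{5..<n}. f {{0,2},{1,k},{3,4}})"
    unfolding B_def sum.reindex[OF inj_B] by (simp add: o_def)
  also have "sum f C = (\<Sum>(w,k)\<in>{3,4} \<times> insert 2 {5..<n}. f {{0,w},{1,k}})"
    unfolding C_def sum.reindex[OF inj_C] by (simp add: o_def prod.case_distrib)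
  finally show ?thesis .
qed

lemma card_R33_maximal_matchings:
  assumes "n \<ge> 5"
  shows "card (R33_maximal_matchings n) = 3 * n - 11"
proof -
  define P where "P = {3::nat,4} \<times> insert 2 {5..<n}"
  have "card P = 2 * (n - 4)"
    unfolding P_def card_cartesian_product using assms by simp
  have "card (R33_maximal_matchings n) = (\<Sum>M\<in>R33_maximal_matchings n. 1)"
    by (rule card_eq_sum)
  also have "\<dots> = 2 + (n - 5) + card P"
    unfolding sum_R33_maximal_matchings P_def[symmetric] by (simp add: split_def)
  finally show ?thesis
    using assms \<open>card P = 2 * (n - 4)\<close> by simp
qed

lemma sum_card_R33_maximal_matchings:
  assumes "n \<ge> 5"
  shows "(\<Sum>M\<in>R33_maximal_matchings n. card M) = 7 * n - 27"
proof -
  define P where "P = {3::nat,4} \<times> insert 2 {5..<n}"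
  have "card P = 2 * (n - 4)"
    unfolding P_def card_cartesian_product using assms by simp
  have "(\<Sum>k\<in>{5..<n}. card {{0,2},{1,k},{3,4}}) = (\<Sum>k\<in>{5..<n}. 3)"
    by (rule sum.cong) (auto simp: doubleton_eq_iff)
  moreover have "(\<Sum>(w,k)\<in>P. card {{0,w},{1,k}}) = (\<Sum>(w,k)\<in>P. 2)"
    unfolding P_def by (rule sum.cong) (auto simp: doubleton_eq_iff)
  ultimately have "(\<Sum>M\<in>R33_maximal_matchings n. card M) = 4 + 3 * (n - 5) + 2 * card P"
    unfolding sum_R33_maximal_matchings P_def[symmetric] by (simp add: split_def doubleton_eq_iff)
  then show ?thesis
    using assms \<open>card P = 2 * (n - 4)\<close> by simp
qed

theorem lemma3p1:
  fixes n :: nat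
  assumes "n \<ge> 6"
  shows "avm (R33 n) = (7 * real n - 27) / (3 * real n - 11)"
proof -
  have "avm (R33 n) =
      real (\<Sum>M\<in>R33_maximal_matchings n. card M) / real (card (R33_maximal_matchings n))"
    unfolding avm_def maximal_matchings_R33[OF assms] by simp
  also have "\<dots> = (7 * real n - 27) / (3 * real n - 11)"
    using assms by (simp add: sum_card_R33_maximal_matchings card_R33_maximal_matchings of_nat_diff)
  finally show ?thesis .
qed

end
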